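(* Let $\mathcal{A}$ be a finite set of positive integers, let $w \leqslant z$ be real numbers, and let $m_1, \dots, m_6$ be real numbers with $(m_1, m_2) \in \mathcal{U}$, $(m_3, m_4) \in \mathcal{U}$ and $(m_5, m_6) \in \mathcal{U}$. Writing $M^r_6 = \sum_{1 \leqslant i_1 < \cdots < i_r \leqslant 6} m_{i_1}\cdots m_{i_r}$ and $P = m_1m_2m_3m_4m_5m_6$, we have $$ S(\mathcal{A}, z) \leqslant S(\mathcal{A}, w) - \frac{M^5_6 - M^4_6 + M^3_6 - M^2_6 + M^1_6 - 1}{P} \sum_{w \leqslant p_1 < z} S(\mathcal{A}_{p_1}, w) + \frac{2(M^4_6 - 3M^3_6 + 7M^2_6 - 15M^1_6 + 31)}{P} \sum_{w \leqslant p_2 < p_1 < z} S(\mathcal{A}_{p_1p_2}, w) $$ $$ - \frac{6(M^3_6 - 6M^2_6 + 25M^1_6 - 90)}{P} \sum_{w \leqslant p_3 < p_2 < p_1 < z} S(\mathcal{A}_{p_1p_2p_3}, w) + \frac{24(M^2_6 - 10M^1_6 + 65)}{P} \sum_{w \leqslant p_4 < \cdots < p_1 < z} S(\mathcal{A}_{p_1p_2p_3p_4}, w) $$ $$ - \frac{120(M^1_6 - 15)}{P} \sum_{w \leqslant p_5 < \cdots < p_1 < z} S(\mathcal{A}_{p_1\cdots p_5}, w) + \frac{720}{P} \sum_{w \leqslant p_6 < \cdots < p_1 < z} S(\mathcal{A}_{p_1\cdots p_6}, w). $$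
   Context: Throughout, $p, p_1, p_2, \dots$ denote prime numbers. For a finite set $\mathcal{A}$ of positive integers and a positive integer $d$, $\mathcal{A}_d = \{a : ad \in \mathcal{A}\}$. For real $z$, $S(\mathcal{A}, z)$ denotes the number of $a \in \mathcal{A}$ having no prime factor less than $z$. Let $T = (0,1] \cup [2,3] \cup [4,5] \cup \cdots$, i.e. $T$ is the union of $(0,1]$ and the intervals $[k-1,k]$ over all odd integers $k \geqslant 3$, and let $\mathcal{U} = \{(x_1, x_2) : x_1, x_2 \in T,\ |x_1 - x_2| \leqslant 1\}$. *)

theory Defs
  imports Complex_Main "HOL-Computational_Algebra.Primes"
begin

definition T_set :: "real set" where
  "T_set = {x. 0 < x \<and> x \<le> 1} \<union>
           {x. \<exists>k::nat. odd k \<and> 3 \<le> k \<and> real k - 1 \<le> x \<and> x \<le> real k}"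

definition U_set :: "(real \<times> real) set" where
  "U_set = {(x1, x2). x1 \<in> T_set \<and> x2 \<in> T_set \<and> \<bar>x1 - x2\<bar> \<le> 1}"

definition Ad :: "nat set \<Rightarrow> nat \<Rightarrow> nat set" where
  "Ad A d = {a. a * d \<in> A}"

definition S :: "nat set \<Rightarrow> real \<Rightarrow> nat" where
  "S A z = card {a \<in> A. \<forall>p. prime p \<and> real p < z \<longrightarrow> \<not> p dvd a}"

definition primes_in :: "real \<Rightarrow> real \<Rightarrow> nat set" where
  "primes_in w z = {p. prime p \<and> w \<le> real p \<and> real p < z}"

definition M6 :: "nat \<Rightarrow> (nat \<Rightarrow> real) \<Rightarrow> real" where
  "M6 r m = (\<Sum>I\<in>{I. I \<subseteq> {1..6} \<and> card I = r}. \<Prod>i\<in>I. m i)"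

end

(*
  Let B be the set of a in A without prime factors below w, and for a in B let
  nu(a) be the number of primes in [w, z) dividing a. Counting divisibilities, the
  k-fold sum over w <= p_k < ... < p_1 < z of S(A_{p_1...p_k}, w) equals the sum of
  C(nu(a), k) over a in B. Hence the right-hand side is the sum over a in B of
  F(nu(a)), where F(n) = sum_k c_k C(n, k) and the c_k are chosen so that
  F(n) = (m_1 - n) ... (m_6 - n) / P. Since F(0) = 1, it suffices that F(n) >= 0 for
  every n >= 1: no integer n >= 1 lies strictly between two coordinates of a point
  of U, so each factor (m_1 - n)(m_2 - n), (m_3 - n)(m_4 - n), (m_5 - n)(m_6 - n)
  is nonnegative.
*)
theory Submission
  imports Defs
begin

lemma prod_add_eq_sum_card_subsets:
  fixes m :: "'a \<Rightarrow> 'b::comm_ring_1"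
  assumes "finite I"
  shows "(\<Prod>i\<in>I. m i + x) = (\<Sum>r\<le>card I. (\<Sum>J | J \<subseteq> I \<and> card J = r. \<Prod>i\<in>J. m i) * x ^ (card I - r))"
proof -
  have "(\<Prod>i\<in>I. m i + x) = (\<Sum>J\<in>Pow I. (\<Prod>i\<in>J. m i) * x ^ (card I - card J))"
    using assms by (simp add: prod_add card_Diff_subset finite_subset)
  also have "\<dots> = (\<Sum>r\<le>card I. \<Sum>J | J \<in> Pow I \<and> card J = r. (\<Prod>i\<in>J. m i) * x ^ (card I - card J))"
    using assms by (intro sum.group[symmetric]) (auto intro: card_mono)
  also have "\<dots> = (\<Sum>r\<le>card I. (\<Sum>J | J \<subseteq> I \<and> card J = r. \<Prod>i\<in>J. m i) * x ^ (card I - r))"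
    by (simp add: sum_distrib_right)
  finally show ?thesis .
qed

lemma M6_0: "M6 0 m = 1"
proof -
  have "{I. I \<subseteq> {1..6::nat} \<and> card I = 0} = {{}}"
    using finite_subset by fastforce
  then show ?thesis by (simp add: M6_def)
qed

lemma M6_6: "M6 6 m = m 1 * m 2 * m 3 * m 4 * m 5 * m 6"
proof -
  have "{I. I \<subseteq> {1..6::nat} \<and> card I = 6} = {{1..6}}"
    using card_subset_eq[of "{1..6::nat}"] by auto
  then show ?thesis by (simp add: M6_def numeral_eq_Suc mult_ac)
qed

lemma prod_diff_M6:
  "(\<Prod>i=1..6. m i - x) = M6 6 m - M6 5 m * x + M6 4 m * x^2 - M6 3 m * x^3
     + M6 2 m * x^4 - M6 1 m * x^5 + x^6"
proof -
  have "(\<Prod>i=1..6. m i - x) = (\<Sum>r\<le>6. M6 r m * (- x) ^ (6 - r))"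
    using prod_add_eq_sum_card_subsets[of "{1..6::nat}" m "- x"] by (simp add: M6_def)
  then show ?thesis by (simp add: numeral_eq_Suc M6_0)
qed

lemma fact_mult_binomial: "fact k * real (n choose k) = (\<Prod>i<k. real n - real i)"
  by (simp add: binomial_gbinomial gbinomial_mult_fact atLeast0LessThan)

lemma prod_diff_M6_binomial_expansion:
  "(\<Prod>i=1..6. m i - real n) = M6 6 m
     - (M6 5 m - M6 4 m + M6 3 m - M6 2 m + M6 1 m - 1) * real n
     + 2 * (M6 4 m - 3 * M6 3 m + 7 * M6 2 m - 15 * M6 1 m + 31) * real (n choose 2)
     - 6 * (M6 3 m - 6 * M6 2 m + 25 * M6 1 m - 90) * real (n choose 3)
     + 24 * (M6 2 m - 10 * M6 1 m + 65) * real (n choose 4)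
     - 120 * (M6 1 m - 15) * real (n choose 5)
     + 720 * real (n choose 6)"
proof -
  have "2 * real (n choose 2) = real n * (real n - 1)"
    and "6 * real (n choose 3) = real n * (real n - 1) * (real n - 2)"
    and "24 * real (n choose 4) = real n * (real n - 1) * (real n - 2) * (real n - 3)"
    and "120 * real (n choose 5) = real n * (real n - 1) * (real n - 2) * (real n - 3) * (real n - 4)"
    and "720 * real (n choose 6) = real n * (real n - 1) * (real n - 2) * (real n - 3) * (real n - 4) * (real n - 5)"
    using fact_mult_binomial[of 2 n] fact_mult_binomial[of 3 n] fact_mult_binomial[of 4 n]
      fact_mult_binomial[of 5 n] fact_mult_binomial[of 6 n]
    by (simp_all add: lessThan_nat_numeral fact_numeral mult_ac)
  then show ?thesis
    unfolding prod_diff_M6 mult.assoc[symmetric] by algebra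
qed

(* The coefficients c_k of the k-fold sums in the theorem; they are the coefficients of
   (m_1 - n) ... (m_6 - n) / P in the basis C(n, k). *)
definition sieve_weight :: "(nat \<Rightarrow> real) \<Rightarrow> nat \<Rightarrow> real" where
  "sieve_weight m k = [1,
     - ((M6 5 m - M6 4 m + M6 3 m - M6 2 m + M6 1 m - 1) / M6 6 m),
     2 * (M6 4 m - 3 * M6 3 m + 7 * M6 2 m - 15 * M6 1 m + 31) / M6 6 m,
     - (6 * (M6 3 m - 6 * M6 2 m + 25 * M6 1 m - 90) / M6 6 m),
     24 * (M6 2 m - 10 * M6 1 m + 65) / M6 6 m,
     - (120 * (M6 1 m - 15) / M6 6 m),
     720 / M6 6 m] ! k"

lemma sum_sieve_weight_binomial:
  assumes "M6 6 m \<noteq> 0"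
  shows "(\<Sum>k\<le>6. sieve_weight m k * real (n choose k)) = (\<Prod>i=1..6. m i - real n) / M6 6 m"
proof -
  have "{..6::nat} = {0, 1, 2, 3, 4, 5, 6}" by auto
  then show ?thesis
    unfolding prod_diff_M6_binomial_expansion
    using assms by (simp add: sieve_weight_def field_simps)
qed

lemma T_set_pos: "x \<in> T_set \<Longrightarrow> 0 < x"
  by (auto simp: T_set_def)

lemma T_set_between_nat_even:
  assumes "x \<in> T_set" "real j < x" "x < real j + 1"
  shows "even j"
proof -
  consider "x \<le> 1" | k where "odd k" "real k - 1 \<le> x" "x \<le> real k"
    using assms(1) by (auto simp: T_set_def)
  then show ?thesis
  proof cases
    case 1
    then have "j = 0" using assms(2) by linarith
    then show ?thesis by simp
  next
    case 2
    then have "real j < real k" "real k < real j + 2"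
      using assms(2,3) by linarith+
    then have "k = j + 1" by linarith
    with \<open>odd k\<close> show ?thesis by simp
  qed
qed

lemma T_set_no_nat_strictly_between:
  assumes "x \<in> T_set" "y \<in> T_set" "y \<le> x + 1" "x < real n" "real n < y"
  shows False
proof -
  have "0 < real n" using T_set_pos[OF assms(1)] assms(4) by linarith
  then have "n \<ge> 1" by simp
  then have "real (n - 1) = real n - 1" by (simp add: of_nat_diff)
  then have "even (n - 1)"
    using assms(3-5) by (intro T_set_between_nat_even[OF assms(1)]) linarith+
  moreover have "even n"
    using assms(3-5) by (intro T_set_between_nat_even[OF assms(2)]) linarith+
  ultimately show False
    using \<open>n \<ge> 1\<close> by simp
qed

lemma U_set_mult_nonneg:
  assumes "(x, y) \<in> U_set"
  shows "0 \<le> (x - real n) * (y - real n)"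
proof (rule ccontr)
  assume "\<not> ?thesis"
  then have "(x - real n) * (y - real n) < 0" by simp
  then have "x < real n \<and> real n < y \<or> y < real n \<and> real n < x"
    by (auto simp: mult_less_0_iff)
  then show False
    using assms T_set_no_nat_strictly_between[of x y n] T_set_no_nat_strictly_between[of y x n]
    by (auto simp: U_set_def abs_le_iff)
qed

lemma prod_diff_U_set_nonneg:
  fixes m :: "nat \<Rightarrow> real"
  assumes "(m 1, m 2) \<in> U_set" "(m 3, m 4) \<in> U_set" "(m 5, m 6) \<in> U_set"
  shows "0 \<le> (\<Prod>i=1..6. m i - real n)"
proof -
  have "(\<Prod>i=1..6. m i - real n) = ((m 1 - real n) * (m 2 - real n))
      * ((m 3 - real n) * (m 4 - real n)) * ((m 5 - real n) * (m 6 - real n))"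
    by (simp add: numeral_eq_Suc mult_ac)
  then show ?thesis
    using assms by (simp add: U_set_mult_nonneg)
qed

lemma sieve_weight_admissible:
  fixes m :: "nat \<Rightarrow> real"
  assumes "(m 1, m 2) \<in> U_set" "(m 3, m 4) \<in> U_set" "(m 5, m 6) \<in> U_set"
  shows "of_bool (n = 0) \<le> (\<Sum>k\<le>6. sieve_weight m k * real (n choose k))"
proof -
  have "0 < M6 6 m"
    using assms by (auto simp: M6_6 U_set_def dest!: T_set_pos)
  then have weighted_sum: "(\<Sum>k\<le>6. sieve_weight m k * real (n choose k)) =
      (\<Prod>i=1..6. m i - real n) / M6 6 m"
    by (simp add: sum_sieve_weight_binomial)
  show ?thesis
  proof (cases "n = 0")
    case True
    then show ?thesis
      using weighted_sum prod_diff_M6[of m 0] \<open>0 < M6 6 m\<close> by simp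
  next
    case False
    then show ?thesis
      using weighted_sum prod_diff_U_set_nonneg[OF assms, of n] \<open>0 < M6 6 m\<close> by simp
  qed
qed

lemma finite_primes_in: "finite (primes_in w u)"
proof (rule finite_subset)
  show "primes_in w u \<subseteq> {..nat \<lceil>u\<rceil>}"
    by (auto simp: primes_in_def le_nat_iff) (metis ceiling_mono ceiling_of_nat less_imp_le)
qed simp

(* desc_prime_sum w k u f is the sum of f (p_1 ... p_k) over primes w <= p_k < ... < p_1 < u. *)
fun desc_prime_sum :: "real \<Rightarrow> nat \<Rightarrow> real \<Rightarrow> (nat \<Rightarrow> real) \<Rightarrow> real" where
  "desc_prime_sum w 0 u f = f 1"
| "desc_prime_sum w (Suc k) u f =
     (\<Sum>p\<in>primes_in w u. desc_prime_sum w k (real p) (\<lambda>d. f (p * d)))"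

lemma sum_card_Suc_subsets_by_Max:
  fixes f :: "nat set \<Rightarrow> 'a::comm_monoid_add"
  shows "(\<Sum>Q | Q \<subseteq> primes_in w u \<and> card Q = Suc k. f Q) =
    (\<Sum>p\<in>primes_in w u. \<Sum>Q | Q \<subseteq> primes_in w (real p) \<and> card Q = k. f (insert p Q))"
proof -
  let ?pairs = "SIGMA p:primes_in w u. {Q. Q \<subseteq> primes_in w (real p) \<and> card Q = k}"
  have "(\<Sum>p\<in>primes_in w u. \<Sum>Q | Q \<subseteq> primes_in w (real p) \<and> card Q = k. f (insert p Q))
      = (\<Sum>(p, Q)\<in>?pairs. f (insert p Q))"
    by (rule sum.Sigma) (auto simp: finite_primes_in)
  also have "\<dots> = (\<Sum>Q | Q \<subseteq> primes_in w u \<and> card Q = Suc k. f Q)"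
  proof (rule sum.reindex_bij_witness[where j = "\<lambda>(p, Q). insert p Q" and i = "\<lambda>Q. (Max Q, Q - {Max Q})"])
    fix pQ assume "pQ \<in> ?pairs"
    then obtain p Q where pQ: "pQ = (p, Q)" and p: "p \<in> primes_in w u"
      and Q: "Q \<subseteq> primes_in w (real p)" "card Q = k" by blast
    have "finite Q" using Q(1) finite_primes_in finite_subset by blast
    moreover have below: "q < p" if "q \<in> Q" for q using Q(1) that by (auto simp: primes_in_def)
    ultimately have "Max (insert p Q) = p"
      by (intro Max_eqI) (auto intro: less_imp_le)
    have "p \<notin> Q" using below by blast
    have "insert p Q \<subseteq> primes_in w u"
      using p Q(1) below by (auto simp: primes_in_def) (meson less_trans of_nat_less_iff)
    then show "(\<lambda>Q. (Max Q, Q - {Max Q})) ((\<lambda>(p, Q). insert p Q) pQ) = pQ"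
      and "(\<lambda>(p, Q). insert p Q) pQ \<in> {Q. Q \<subseteq> primes_in w u \<and> card Q = Suc k}"
      using pQ Q \<open>finite Q\<close> \<open>Max (insert p Q) = p\<close> \<open>p \<notin> Q\<close> by auto
  next
    fix Q assume "Q \<in> {Q. Q \<subseteq> primes_in w u \<and> card Q = Suc k}"
    then have Q: "Q \<subseteq> primes_in w u" "card Q = Suc k" by auto
    then have "finite Q" "Q \<noteq> {}"
      using finite_subset[OF _ finite_primes_in] by auto
    then have max_in: "Max Q \<in> Q" by simp
    have below_max: "q < Max Q" if "q \<in> Q - {Max Q}" for q
      using that Max_ge[OF \<open>finite Q\<close>, of q] by auto
    then show "(\<lambda>(p, Q). insert p Q) ((\<lambda>Q. (Max Q, Q - {Max Q})) Q) = Q"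
      and "(\<lambda>Q. (Max Q, Q - {Max Q})) Q \<in> ?pairs"
      using Q \<open>finite Q\<close> max_in below_max by (auto simp: primes_in_def)
  qed auto
  finally show ?thesis ..
qed

lemma desc_prime_sum_eq_sum_subsets:
  "desc_prime_sum w k u f = (\<Sum>Q | Q \<subseteq> primes_in w u \<and> card Q = k. f (\<Prod>Q))"
proof (induction k arbitrary: u f)
  case 0
  have "{Q. Q \<subseteq> primes_in w u \<and> card Q = 0} = {{}}"
    using finite_primes_in finite_subset by fastforce
  then show ?case by simp
next
  case (Suc k)
  have "desc_prime_sum w (Suc k) u f =
      (\<Sum>p\<in>primes_in w u. \<Sum>Q | Q \<subseteq> primes_in w (real p) \<and> card Q = k. f (p * \<Prod>Q))"
    by (simp add: Suc.IH)
  also have "\<dots> =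
      (\<Sum>p\<in>primes_in w u. \<Sum>Q | Q \<subseteq> primes_in w (real p) \<and> card Q = k. f (\<Prod>(insert p Q)))"
  proof (intro sum.cong refl)
    fix p Q assume "Q \<in> {Q. Q \<subseteq> primes_in w (real p) \<and> card Q = k}"
    then have "Q \<subseteq> primes_in w (real p)" by simp
    then have "finite Q" "p \<notin> Q"
      by (auto intro: finite_subset[OF _ finite_primes_in]) (auto simp: primes_in_def)
    then show "f (p * \<Prod>Q) = f (\<Prod>(insert p Q))" by simp
  qed
  also have "\<dots> = (\<Sum>Q | Q \<subseteq> primes_in w u \<and> card Q = Suc k. f (\<Prod>Q))"
    by (rule sum_card_Suc_subsets_by_Max[symmetric])
  finally show ?case .
qed

lemma prod_primes_dvd_iff:
  fixes Q :: "nat set"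
  assumes "finite Q" "\<And>q. q \<in> Q \<Longrightarrow> prime q"
  shows "\<Prod>Q dvd a \<longleftrightarrow> (\<forall>q\<in>Q. q dvd a)"
  using assms
proof (induction Q rule: finite_induct)
  case (insert p Q)
  have "coprime p (\<Prod>Q)"
    using insert by (intro prod_coprime_right primes_coprime) auto
  then show ?case
    using insert by (auto simp: divides_mult dest: dvd_mult_left dvd_mult_right)
qed simp

lemma prime_dvd_prod_primes_iff:
  fixes Q :: "nat set"
  assumes "finite Q" "\<And>q. q \<in> Q \<Longrightarrow> prime q" "prime p"
  shows "p dvd \<Prod>Q \<longleftrightarrow> p \<in> Q"
proof -
  have "p dvd \<Prod>Q \<longleftrightarrow> (\<exists>q\<in>Q. p dvd q)"
    using prime_dvd_prod_iff[OF assms(1,3)] by simp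
  also have "\<dots> \<longleftrightarrow> p \<in> Q"
    using assms(2,3) by (metis primes_dvd_imp_eq dvd_refl)
  finally show ?thesis .
qed

definition sifted :: "nat set \<Rightarrow> real \<Rightarrow> nat set" where
  "sifted A w = {a \<in> A. \<forall>p. prime p \<and> real p < w \<longrightarrow> \<not> p dvd a}"

lemma Ad_one [simp]: "Ad A 1 = A"
  by (simp add: Ad_def)

lemma S_eq_card_sifted: "S A w = card (sifted A w)"
  by (simp add: S_def sifted_def)

lemma S_Ad_eq_card_sifted_dvd:
  assumes "d > 0" and large: "\<And>p. prime p \<Longrightarrow> p dvd d \<Longrightarrow> w \<le> real p"
  shows "S (Ad A d) w = card {a \<in> sifted A w. d dvd a}"
proof -
  have small_dvd: "p dvd b * d \<longleftrightarrow> p dvd b" if "prime p" "real p < w" for p b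
    using that large[of p] by (auto simp: prime_dvd_mult_iff)
  have "(\<lambda>b. b * d) ` sifted (Ad A d) w = {a \<in> sifted A w. d dvd a}"
  proof
    show "(\<lambda>b. b * d) ` sifted (Ad A d) w \<subseteq> {a \<in> sifted A w. d dvd a}"
      using small_dvd by (auto simp: sifted_def Ad_def)
    show "{a \<in> sifted A w. d dvd a} \<subseteq> (\<lambda>b. b * d) ` sifted (Ad A d) w"
    proof
      fix a assume a: "a \<in> {a \<in> sifted A w. d dvd a}"
      then have "a div d * d = a" by simp
      then show "a \<in> (\<lambda>b. b * d) ` sifted (Ad A d) w"
        using a small_dvd[of _ "a div d"]
        by (intro image_eqI[where x = "a div d"]) (auto simp: sifted_def Ad_def)
    qed
  qed
  moreover have "inj_on (\<lambda>b. b * d) (sifted (Ad A d) w)"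
    using \<open>d > 0\<close> by (auto simp: inj_on_def)
  ultimately show ?thesis
    by (metis S_eq_card_sifted card_image)
qed

lemma S_Ad_prod_eq_card_sifted_dvd:
  assumes "Q \<subseteq> primes_in w u"
  shows "S (Ad A (\<Prod>Q)) w = card {a \<in> sifted A w. \<Prod>Q dvd a}"
proof (rule S_Ad_eq_card_sifted_dvd)
  have "finite Q" using assms by (rule finite_subset[OF _ finite_primes_in])
  have Q: "prime q \<and> w \<le> real q" if "q \<in> Q" for q
    using that assms by (auto simp: primes_in_def)
  show "\<Prod>Q > 0"
    using Q by (simp add: prime_gt_0_nat prod_pos)
  show "w \<le> real p" if "prime p" "p dvd \<Prod>Q" for p
    using that Q prime_dvd_prod_primes_iff[OF \<open>finite Q\<close>] by blast
qed

lemma card_prime_subsets_prod_dvd: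
  "card {Q. Q \<subseteq> primes_in w z \<and> card Q = k \<and> \<Prod>Q dvd a} =
    card {p \<in> primes_in w z. p dvd a} choose k"
proof -
  have "\<Prod>Q dvd a \<longleftrightarrow> Q \<subseteq> {p \<in> primes_in w z. p dvd a}" if "Q \<subseteq> primes_in w z" for Q
    using that finite_subset[OF that finite_primes_in]
    by (subst prod_primes_dvd_iff) (auto simp: primes_in_def)
  then have "{Q. Q \<subseteq> primes_in w z \<and> card Q = k \<and> \<Prod>Q dvd a} =
      {Q. Q \<subseteq> {p \<in> primes_in w z. p dvd a} \<and> card Q = k}"
    by auto
  then show ?thesis
    by (simp add: finite_primes_in n_subsets)
qed

lemma desc_prime_sum_S_Ad:
  assumes "finite A"
  shows "desc_prime_sum w k z (\<lambda>d. real (S (Ad A d) w)) =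
    (\<Sum>a\<in>sifted A w. real (card {p \<in> primes_in w z. p dvd a} choose k))"
proof -
  let ?subsets = "{Q. Q \<subseteq> primes_in w z \<and> card Q = k}"
  have "finite (sifted A w)"
    using assms by (simp add: sifted_def)
  have "desc_prime_sum w k z (\<lambda>d. real (S (Ad A d) w)) =
      (\<Sum>Q\<in>?subsets. real (S (Ad A (\<Prod>Q)) w))"
    by (rule desc_prime_sum_eq_sum_subsets)
  also have "\<dots> = (\<Sum>Q\<in>?subsets. \<Sum>a\<in>sifted A w. of_bool (\<Prod>Q dvd a))"
    using \<open>finite (sifted A w)\<close>
    by (intro sum.cong refl) (simp add: S_Ad_prod_eq_card_sifted_dvd[of _ w z] Int_def)
  also have "\<dots> = (\<Sum>a\<in>sifted A w. \<Sum>Q\<in>?subsets. of_bool (\<Prod>Q dvd a))"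
    by (rule sum.swap)
  also have "\<dots> = (\<Sum>a\<in>sifted A w. real (card {p \<in> primes_in w z. p dvd a} choose k))"
    by (simp add: finite_primes_in Int_def card_prime_subsets_prod_dvd conj_assoc)
  finally show ?thesis .
qed

lemma S_le_sum_binomial_weights:
  fixes c :: "nat \<Rightarrow> real"
  assumes "finite A" "w \<le> z"
    and weights: "\<And>n. of_bool (n = 0) \<le> (\<Sum>k\<le>K. c k * real (n choose k))"
  shows "real (S A z) \<le> (\<Sum>k\<le>K. c k * desc_prime_sum w k z (\<lambda>d. real (S (Ad A d) w)))"
proof -
  define \<nu> where "\<nu> a = card {p \<in> primes_in w z. p dvd a}" for a
  have "finite {p \<in> primes_in w z. p dvd a}" for a
    by (simp add: finite_primes_in)
  then have "sifted A z = sifted A w \<inter> {a. \<nu> a = 0}"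
    using \<open>w \<le> z\<close> by (auto simp: sifted_def \<nu>_def primes_in_def)
  then have "real (S A z) = (\<Sum>a\<in>sifted A w. of_bool (\<nu> a = 0))"
    using \<open>finite A\<close> by (simp add: S_eq_card_sifted sifted_def)
  also have "\<dots> \<le> (\<Sum>a\<in>sifted A w. \<Sum>k\<le>K. c k * real (\<nu> a choose k))"
    by (intro sum_mono weights)
  also have "\<dots> = (\<Sum>k\<le>K. c k * (\<Sum>a\<in>sifted A w. real (\<nu> a choose k)))"
    by (simp add: sum.swap[of _ "sifted A w"] sum_distrib_left)
  also have "\<dots> = (\<Sum>k\<le>K. c k * desc_prime_sum w k z (\<lambda>d. real (S (Ad A d) w)))"
    by (simp add: desc_prime_sum_S_Ad[OF \<open>finite A\<close>] \<nu>_def)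
  finally show ?thesis .
qed

theorem theorem4:
  fixes A :: "nat set" and w z :: real and m :: "nat \<Rightarrow> real"
  assumes "finite A" and "0 \<notin> A" and "w \<le> z"
    and "(m 1, m 2) \<in> U_set" and "(m 3, m 4) \<in> U_set" and "(m 5, m 6) \<in> U_set"
  defines "P \<equiv> m 1 * m 2 * m 3 * m 4 * m 5 * m 6"
  shows "real (S A z) \<le> real (S A w)
    - (M6 5 m - M6 4 m + M6 3 m - M6 2 m + M6 1 m - 1) / P
        * (\<Sum>p1\<in>primes_in w z. real (S (Ad A p1) w))
    + 2 * (M6 4 m - 3 * M6 3 m + 7 * M6 2 m - 15 * M6 1 m + 31) / P
        * (\<Sum>p1\<in>primes_in w z. \<Sum>p2\<in>primes_in w (real p1).
             real (S (Ad A (p1 * p2)) w))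
    - 6 * (M6 3 m - 6 * M6 2 m + 25 * M6 1 m - 90) / P
        * (\<Sum>p1\<in>primes_in w z. \<Sum>p2\<in>primes_in w (real p1).
           \<Sum>p3\<in>primes_in w (real p2).
             real (S (Ad A (p1 * p2 * p3)) w))
    + 24 * (M6 2 m - 10 * M6 1 m + 65) / P
        * (\<Sum>p1\<in>primes_in w z. \<Sum>p2\<in>primes_in w (real p1).
           \<Sum>p3\<in>primes_in w (real p2). \<Sum>p4\<in>primes_in w (real p3).
             real (S (Ad A (p1 * p2 * p3 * p4)) w))
    - 120 * (M6 1 m - 15) / P
        * (\<Sum>p1\<in>primes_in w z. \<Sum>p2\<in>primes_in w (real p1).
           \<Sum>p3\<in>primes_in w (real p2). \<Sum>p4\<in>primes_in w (real p3).
           \<Sum>p5\<in>primes_in w (real p4).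
             real (S (Ad A (p1 * p2 * p3 * p4 * p5)) w))
    + 720 / P
        * (\<Sum>p1\<in>primes_in w z. \<Sum>p2\<in>primes_in w (real p1).
           \<Sum>p3\<in>primes_in w (real p2). \<Sum>p4\<in>primes_in w (real p3).
           \<Sum>p5\<in>primes_in w (real p4). \<Sum>p6\<in>primes_in w (real p5).
             real (S (Ad A (p1 * p2 * p3 * p4 * p5 * p6)) w))"
proof -
  have "M6 6 m = P"
    by (simp add: M6_6 P_def)
  have "real (S A z) \<le> (\<Sum>k\<le>6. sieve_weight m k * desc_prime_sum w k z (\<lambda>d. real (S (Ad A d) w)))"
    using assms(1,3) sieve_weight_admissible[OF assms(4-6)] by (rule S_le_sum_binomial_weights)
  then show ?thesis
    unfolding sieve_weight_def \<open>M6 6 m = P\<close>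
    by (simp add: numeral_eq_Suc mult.assoc Ad_one[unfolded One_nat_def])
qed

end
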